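(* Let $s$ be a positive integer and $r$ a nonnegative integer. Then \[ \sum_{D \in \mathcal{D}_{s,s}^{(r)}} q^{\mathrm{vmr}(D)} = q^{\binom{r+1}{2}}\begin{bmatrix}2s-1\\ s+r\end{bmatrix}_q. \]
   Context: A ballot path from $(0,0)$ to $(s+t,s-t)$ is a sequence of lattice points $v_0=(0,0),v_1,\ldots,v_{s+t}=(s+t,s-t)$ with each step $v_i-v_{i-1}\in\{(1,1),(1,-1)\}$ that never goes below the $x$-axis (for $s=t$ these are Dyck paths from $(0,0)$ to $(2s,0)$). A point $v_i$ ($0<i<s+t$) is a valley if $v_i-v_{i-1}=(1,-1)$ and $v_{i+1}-v_i=(1,1)$; a valley lying on the $x$-axis is a return. Each return may independently be marked or not; a marked path is a path together with a choice of which of its returns are marked. $\mathcal{D}_{s,t}^{(r)}$ is the set of marked ballot paths from $(0,0)$ to $(s+t,s-t)$ with at least $r$ marked returns. For such $D$, $\mathrm{maj}(D)$ is the sum of the $x$-coordinates of all valleys of $D$, and $\mathrm{vmr}(D)=\mathrm{maj}(D)-\frac12\sum x_i$, where the last sum runs over the $x$-coordinates $x_i$ of the marked returns of $D$. Notation: $(a;q)_n=(1-a)\cdots(1-aq^{n-1})$ and $\begin{bmatrix}n\\k\end{bmatrix}_q=\frac{(q;q)_n}{(q;q)_k(q;q)_{n-k}}$ for $n\ge k\ge0$, $0$ otherwise. *)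

theory Defs
  imports Complex_Main "HOL-Computational_Algebra.Polynomial"
begin

text \<open>A lattice path of length n is encoded as a list of n booleans:
  True = up step (1,1), False = down step (1,-1).  The point v_i has
  x-coordinate i and y-coordinate path_height p i.\<close>

definition path_height :: "bool list \<Rightarrow> nat \<Rightarrow> int" where
  "path_height p i = (\<Sum>j<i. if p ! j then 1 else -1)"

definition ballot_paths :: "nat \<Rightarrow> nat \<Rightarrow> bool list set" where
  "ballot_paths s t = {p. length p = s + t \<and> path_height p (s + t) = int s - int t
       \<and> (\<forall>i\<le>s + t. 0 \<le> path_height p i)}"

text \<open>Valleys: indices 0<i<length with step i down and step i+1 up
  (step k is the entry p ! (k-1)).  The x-coordinate of v_i is i.\<close>
definition valleys :: "bool list \<Rightarrow> nat set" where
  "valleys p = {i. 0 < i \<and> i < length p \<and> \<not> p ! (i - 1) \<and> p ! i}"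

definition returns :: "bool list \<Rightarrow> nat set" where
  "returns p = {i \<in> valleys p. path_height p i = 0}"

definition marked_paths :: "nat \<Rightarrow> nat \<Rightarrow> nat \<Rightarrow> (bool list \<times> nat set) set" where
  "marked_paths s t r = {(p, M). p \<in> ballot_paths s t \<and> M \<subseteq> returns p \<and> r \<le> card M}"

definition maj :: "bool list \<Rightarrow> nat" where
  "maj p = \<Sum>(valleys p)"

definition vmr :: "bool list \<times> nat set \<Rightarrow> real" where
  "vmr D = real (maj (fst D)) - (\<Sum>x\<in>snd D. real x) / 2"

definition qpoch :: "nat \<Rightarrow> real poly" where
  "qpoch n = (\<Prod>i\<in>{1..n}. 1 - monom 1 i)"

definition qbinom :: "nat \<Rightarrow> nat \<Rightarrow> real poly" where
  "qbinom n k = (if k \<le> n then qpoch n div (qpoch k * qpoch (n - k)) else 0)"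

end

theory Submission
  imports Defs
begin

text \<open>Summing out the marks first, a path \<open>p\<close> contributes \<open>q^maj p\<close> times the sum of
  \<open>q^(-\<Sigma>M/2)\<close> over the sets \<open>M\<close> of at least \<open>r\<close> of its returns.  We generalise to ballot
  paths ending at height \<open>s - t > 0\<close> and decompose by the last step: an up step after a valley
  at \<open>x\<close> adds \<open>x\<close> to \<open>maj\<close>, and if the valley is a return it may also be marked.  For
  \<open>t < s\<close> this gives recursions in \<open>(s, t, r)\<close> which are also satisfied, by the q-Pascal rules,
  by \<open>q^(r+1 choose 2) [s+t, t-r]_q\<close>.  A Dyck path of semilength \<open>s\<close> ends with a down step,
  so the theorem is the case \<open>t = s - 1\<close>, up to the symmetry \<open>[2s-1, s-1-r]_q = [2s-1, s+r]_q\<close>.\<close>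

text \<open>\<open>qbinom\<close> is defined by polynomial division; the recursive version shows that the
  division is exact.\<close>
fun qbinom_rec :: "nat \<Rightarrow> nat \<Rightarrow> real poly" where
  "qbinom_rec 0 k = (if k = 0 then 1 else 0)"
| "qbinom_rec (Suc n) 0 = 1"
| "qbinom_rec (Suc n) (Suc k) = qbinom_rec n k + monom 1 (Suc k) * qbinom_rec n (Suc k)"

lemma qbinom_rec_eq_0: "n < k \<Longrightarrow> qbinom_rec n k = 0"
  by (induction n k rule: qbinom_rec.induct) auto

lemma qpoch_Suc: "qpoch (Suc n) = qpoch n * (1 - monom 1 (Suc n))"
  by (simp add: qpoch_def atLeastAtMostSuc_conv mult.commute)

lemma qpoch_nonzero: "qpoch n \<noteq> 0"
proof -
  have "coeff (1 - monom (1::real) i) 0 = 1" if "0 < i" for i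
    using that by (simp add: coeff_monom)
  then have "1 - monom (1::real) i \<noteq> 0" if "0 < i" for i
    using that by (metis coeff_0 zero_neq_one)
  then show ?thesis by (auto simp: qpoch_def)
qed

lemma qpoch_mult_qbinom_rec:
  "k \<le> n \<Longrightarrow> qpoch k * qpoch (n - k) * qbinom_rec n k = qpoch n"
proof (induction n arbitrary: k)
  case 0 then show ?case by (simp add: qpoch_def)
next
  case (Suc n)
  show ?case
  proof (cases k)
    case 0 then show ?thesis by (simp add: qpoch_def)
  next
    case (Suc k')
    have k': "k' \<le> n" using Suc.prems Suc by simp
    have left: "qpoch (Suc k') * qpoch (n - k') * qbinom_rec n k' = (1 - monom 1 (Suc k')) * qpoch n"
      using Suc.IH[OF k'] by (simp add: qpoch_Suc algebra_simps)
    have right: "qpoch (Suc k') * qpoch (n - k') * (monom 1 (Suc k') * qbinom_rec n (Suc k'))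
       = (monom 1 (Suc k') - monom 1 (Suc n)) * qpoch n"
    proof (cases "Suc k' \<le> n")
      case True
      have n: "n - k' = Suc (n - Suc k')" using True by simp
      have m: "monom (1::real) (Suc k') * monom 1 (n - k') = monom 1 (Suc n)"
        using True by (simp add: mult_monom)
      have "qpoch (Suc k') * qpoch (n - k') * (monom 1 (Suc k') * qbinom_rec n (Suc k'))
        = (qpoch (Suc k') * qpoch (n - Suc k') * qbinom_rec n (Suc k'))
            * (monom 1 (Suc k') - monom 1 (Suc k') * monom 1 (n - k'))"
        by (simp only: n qpoch_Suc) (simp add: algebra_simps)
      then show ?thesis using Suc.IH[OF True] by (simp only: m) (simp add: algebra_simps)
    next
      case False
      with k' have "k' = n" by simp
      then show ?thesis by (simp add: qbinom_rec_eq_0)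
    qed
    have "qpoch k * qpoch (Suc n - k) * qbinom_rec (Suc n) k
       = qpoch (Suc k') * qpoch (n - k') * qbinom_rec n k'
         + qpoch (Suc k') * qpoch (n - k') * (monom 1 (Suc k') * qbinom_rec n (Suc k'))"
      using Suc by (simp add: algebra_simps)
    also have "\<dots> = qpoch n * (1 - monom 1 (Suc n))"
      by (simp only: left right) (simp add: algebra_simps)
    finally show ?thesis by (simp add: qpoch_Suc)
  qed
qed

lemma qbinom_eq_qbinom_rec: "qbinom n k = qbinom_rec n k"
proof (cases "k \<le> n")
  case True
  then have "qbinom n k = (qbinom_rec n k * (qpoch k * qpoch (n - k))) div (qpoch k * qpoch (n - k))"
    using qpoch_mult_qbinom_rec[OF True] by (simp add: qbinom_def algebra_simps)
  then show ?thesis by (simp add: qpoch_nonzero)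
next
  case False
  then show ?thesis by (simp add: qbinom_def qbinom_rec_eq_0)
qed

lemma qbinom_0_right [simp]: "qbinom n 0 = 1"
  by (cases n) (simp_all add: qbinom_eq_qbinom_rec)

lemma qbinom_eq_0: "n < k \<Longrightarrow> qbinom n k = 0"
  by (simp add: qbinom_def)

lemma qbinom_Suc_Suc:
  "qbinom (Suc n) (Suc k) = qbinom n k + monom 1 (Suc k) * qbinom n (Suc k)"
  by (simp add: qbinom_eq_qbinom_rec)

lemma qbinom_symmetric: "k \<le> n \<Longrightarrow> qbinom n (n - k) = qbinom n k"
  by (simp add: qbinom_def mult.commute)

lemma qbinom_Suc_Suc':
  assumes "k \<le> n"
  shows "qbinom (Suc n) (Suc k) = monom 1 (n - k) * qbinom n k + qbinom n (Suc k)"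
proof (cases "k = n")
  case True
  then show ?thesis using qbinom_symmetric[of n n] qbinom_symmetric[of "Suc n" "Suc n"]
    by (simp add: qbinom_eq_0)
next
  case False
  then obtain j where j: "n - k = Suc j" using assms by (metis Suc_diff_Suc le_neq_implies_less)
  have "qbinom (Suc n) (Suc k) = qbinom (Suc n) (Suc j)"
    using qbinom_symmetric[of "Suc k" "Suc n"] assms j by simp
  also have "\<dots> = qbinom n j + monom 1 (Suc j) * qbinom n (Suc j)"
    by (rule qbinom_Suc_Suc)
  also have "qbinom n j = qbinom n (Suc k)"
  proof -
    have "n - Suc k = j" using j by simp
    then show ?thesis using qbinom_symmetric[of "Suc k" n] assms False by simp
  qed
  also have "qbinom n (Suc j) = qbinom n k"
    using qbinom_symmetric[of k n] assms j by simp
  finally show ?thesis using j by (simp add: algebra_simps)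
qed

lemma qbinom_Suc_Suc_Suc:
  assumes "j \<le> m"
  shows "qbinom (Suc (Suc m)) (Suc j)
    = qbinom (Suc m) j + monom 1 (Suc m) * qbinom m j + monom 1 (Suc j) * qbinom m (Suc j)"
proof -
  have "monom (1::real) (Suc j) * monom 1 (m - j) = monom 1 (Suc m)"
    using assms by (simp add: mult_monom)
  then show ?thesis
    unfolding qbinom_Suc_Suc[of "Suc m"] qbinom_Suc_Suc'[OF assms]
    by (simp add: algebra_simps)
qed

lemma qbinom_Suc_Suc_Suc':
  assumes "j \<le> m"
  shows "qbinom (Suc (Suc m)) (Suc j)
    = qbinom (Suc m) j + qbinom (Suc m) (Suc j) + (monom 1 (Suc m) - 1) * qbinom m j"
  unfolding qbinom_Suc_Suc_Suc[OF assms] qbinom_Suc_Suc[of m j] by (simp add: algebra_simps)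

lemma Suc_choose_2: "Suc n choose 2 = n + (n choose 2)"
  using binomial_Suc_Suc[of n 1] by (simp add: numeral_2_eq_2)

abbreviation ends_up :: "bool list \<Rightarrow> bool" where
  "ends_up p \<equiv> p \<noteq> [] \<and> last p"

abbreviation ends_down :: "bool list \<Rightarrow> bool" where
  "ends_down p \<equiv> p \<noteq> [] \<and> \<not> last p"

lemma path_height_snoc: "i \<le> length p \<Longrightarrow> path_height (p @ [b]) i = path_height p i"
  unfolding path_height_def by (rule sum.cong) (auto simp: nth_append)

lemma path_height_snoc_end:
  "path_height (p @ [b]) (Suc (length p)) = path_height p (length p) + (if b then 1 else -1)"
  using path_height_snoc[of "length p" p b] by (simp add: path_height_def nth_append)

lemma path_height_le: "path_height p i \<le> int i"
proof -
  have "path_height p i \<le> (\<Sum>j<i. 1)" unfolding path_height_def by (rule sum_mono) auto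
  then show ?thesis by simp
qed

lemma nonneg_path_height_snoc_iff:
  "(\<forall>i\<le>Suc (length p). 0 \<le> path_height (p @ [b]) i)
     \<longleftrightarrow> (\<forall>i\<le>length p. 0 \<le> path_height p i) \<and> 0 \<le> path_height p (length p) + (if b then 1 else -1)"
  by (auto simp: le_Suc_eq path_height_snoc path_height_snoc_end)

lemma ballot_paths_iff:
  "p \<in> ballot_paths s t \<longleftrightarrow> length p = s + t \<and> path_height p (length p) = int s - int t
     \<and> (\<forall>i\<le>length p. 0 \<le> path_height p i)"
  unfolding ballot_paths_def by auto

lemma ballot_paths_eq_empty: "s < t \<Longrightarrow> ballot_paths s t = {}"
  unfolding ballot_paths_def by force

lemma ballot_paths_0_0: "ballot_paths 0 0 = {[]}"
  unfolding ballot_paths_def by (auto simp: path_height_def)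

lemma finite_ballot_paths: "finite (ballot_paths s t)"
  by (rule finite_subset[OF _ finite_list_length[of "s + t"]]) (auto simp: ballot_paths_def)

lemma snoc_True_in_ballot_paths_iff: "p @ [True] \<in> ballot_paths (Suc s) t \<longleftrightarrow> p \<in> ballot_paths s t"
  unfolding ballot_paths_iff length_append_singleton nonneg_path_height_snoc_iff path_height_snoc_end
  by auto

lemma snoc_False_in_ballot_paths_iff:
  "t < s \<Longrightarrow> p @ [False] \<in> ballot_paths s (Suc t) \<longleftrightarrow> p \<in> ballot_paths s t"
  unfolding ballot_paths_iff length_append_singleton nonneg_path_height_snoc_iff path_height_snoc_end
  by auto

lemma ballot_paths_ending_up:
  "{p \<in> ballot_paths (Suc s) t. ends_up p} = (\<lambda>p. p @ [True]) ` ballot_paths s t"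
proof (intro set_eqI iffI)
  fix p assume "p \<in> {p \<in> ballot_paths (Suc s) t. ends_up p}"
  then have p: "p \<in> ballot_paths (Suc s) t" "ends_up p" by auto
  then have "p = butlast p @ [True]" by (metis append_butlast_last_id)
  with p(1) have "butlast p @ [True] \<in> ballot_paths (Suc s) t" and "p = butlast p @ [True]" by simp_all
  then show "p \<in> (\<lambda>p. p @ [True]) ` ballot_paths s t"
    unfolding snoc_True_in_ballot_paths_iff by blast
qed (auto simp: snoc_True_in_ballot_paths_iff)

lemma ballot_paths_ending_down:
  assumes "t < s"
  shows "{p \<in> ballot_paths s (Suc t). ends_down p} = (\<lambda>p. p @ [False]) ` ballot_paths s t"
proof (intro set_eqI iffI)
  fix p assume "p \<in> {p \<in> ballot_paths s (Suc t). ends_down p}"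
  then have p: "p \<in> ballot_paths s (Suc t)" "ends_down p" by auto
  then have "p = butlast p @ [False]" by (metis append_butlast_last_id)
  with p(1) have "butlast p @ [False] \<in> ballot_paths s (Suc t)" and "p = butlast p @ [False]" by simp_all
  then show "p \<in> (\<lambda>p. p @ [False]) ` ballot_paths s t"
    unfolding snoc_False_in_ballot_paths_iff[OF assms] by blast
qed (auto simp: snoc_False_in_ballot_paths_iff[OF assms])

lemma ballot_paths_0_not_ends_down: "p \<in> ballot_paths s 0 \<Longrightarrow> \<not> ends_down p"
proof
  assume "p \<in> ballot_paths s 0" and "ends_down p"
  then have "butlast p @ [False] \<in> ballot_paths s 0"
    by (metis (full_types) append_butlast_last_id)
  then show False
    unfolding ballot_paths_iff length_append_singleton path_height_snoc_end
    using path_height_le[of "butlast p" "length (butlast p)"] by auto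
qed

lemma valleys_less_length: "i \<in> valleys p \<Longrightarrow> i < length p"
  unfolding valleys_def by auto

lemma finite_valleys: "finite (valleys p)"
  by (rule finite_subset[of _ "{..<length p}"]) (auto dest: valleys_less_length)

lemma finite_returns: "finite (returns p)"
  by (rule finite_subset[OF _ finite_valleys[of p]]) (auto simp: returns_def)

lemma returns_less_length: "i \<in> returns p \<Longrightarrow> i < length p"
  unfolding returns_def by (auto dest: valleys_less_length)

lemma valleys_snoc:
  "valleys (p @ [b]) = valleys p \<union> (if b \<and> ends_down p then {length p} else {})"
proof -
  have "i \<in> valleys (p @ [b]) \<longleftrightarrow> i \<in> valleys p \<union> (if b \<and> ends_down p then {length p} else {})"
    for i by (cases i "length p" rule: linorder_cases)
             (auto simp: valleys_def nth_append last_conv_nth)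
  then show ?thesis by blast
qed

lemma returns_snoc:
  "returns (p @ [b])
     = returns p \<union> (if b \<and> ends_down p \<and> path_height p (length p) = 0 then {length p} else {})"
  unfolding returns_def valleys_snoc
  by (auto simp: path_height_snoc dest: valleys_less_length)

lemma maj_snoc: "maj (p @ [b]) = maj p + (if b \<and> ends_down p then length p else 0)"
proof -
  have "length p \<notin> valleys p" by (auto dest: valleys_less_length)
  then show ?thesis unfolding maj_def valleys_snoc using finite_valleys[of p] by auto
qed

lemma sum_ballot_paths_ends_up:
  "(\<Sum>p | p \<in> ballot_paths (Suc s) t \<and> ends_up p. f p) = (\<Sum>p\<in>ballot_paths s t. f (p @ [True]))"
  using ballot_paths_ending_up[of s t] by (simp add: sum.reindex inj_on_def)

lemma sum_ballot_paths_ends_down: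
  "t < s \<Longrightarrow> (\<Sum>p | p \<in> ballot_paths s (Suc t) \<and> ends_down p. f p) = (\<Sum>p\<in>ballot_paths s t. f (p @ [False]))"
  using ballot_paths_ending_down[of t s] by (simp add: sum.reindex inj_on_def)

lemma sum_ballot_paths_by_last_step:
  assumes "0 < s + t"
  shows "(\<Sum>p\<in>ballot_paths s t. f p)
    = (\<Sum>p | p \<in> ballot_paths s t \<and> ends_up p. f p) + (\<Sum>p | p \<in> ballot_paths s t \<and> ends_down p. f p)"
proof -
  have split: "ballot_paths s t = {p \<in> ballot_paths s t. ends_up p} \<union> {p \<in> ballot_paths s t. ends_down p}"
    using assms by (auto simp: ballot_paths_iff)
  show ?thesis
    by (subst split, rule sum.union_disjoint) (auto intro: finite_subset[OF _ finite_ballot_paths])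
qed

lemma sum_ballot_paths_diag:
  "(\<Sum>p\<in>ballot_paths (Suc t) (Suc t). f p) = (\<Sum>p\<in>ballot_paths (Suc t) t. f (p @ [False]))"
proof -
  have "(\<Sum>p\<in>ballot_paths (Suc t) (Suc t). f p)
      = (\<Sum>p | p \<in> ballot_paths (Suc t) (Suc t) \<and> ends_up p. f p)
        + (\<Sum>p | p \<in> ballot_paths (Suc t) (Suc t) \<and> ends_down p. f p)"
    by (rule sum_ballot_paths_by_last_step) simp
  then show ?thesis
    by (simp add: sum_ballot_paths_ends_up sum_ballot_paths_ends_down ballot_paths_eq_empty)
qed

context
  fixes q :: real
  assumes q_pos: "0 < q"
begin

definition marked_weight :: "nat set \<Rightarrow> real" where
  "marked_weight M = q powr (- (\<Sum>x\<in>M. real x) / 2)"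

definition returns_weight :: "nat \<Rightarrow> nat set \<Rightarrow> real" where
  "returns_weight r A = (\<Sum>M | M \<subseteq> A \<and> r \<le> card M. marked_weight M)"

definition path_weight :: "nat \<Rightarrow> bool list \<Rightarrow> real" where
  "path_weight r p = q ^ maj p * returns_weight r (returns p)"

definition ballot_sum :: "nat \<Rightarrow> nat \<Rightarrow> nat \<Rightarrow> real" where
  "ballot_sum s t r = (\<Sum>p\<in>ballot_paths s t. path_weight r p)"

lemma sum_marked_paths_eq_ballot_sum:
  "(\<Sum>D\<in>marked_paths s t r. q powr vmr D) = ballot_sum s t r"
proof -
  have marked: "marked_paths s t r = (SIGMA p:ballot_paths s t. {M. M \<subseteq> returns p \<and> r \<le> card M})"
    unfolding marked_paths_def by auto
  have finite_marks: "finite {M. M \<subseteq> returns p \<and> r \<le> card M}" for p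
    by (rule finite_subset[of _ "Pow (returns p)"]) (auto simp: finite_returns)
  have weight: "q powr vmr (p, M) = q ^ maj p * marked_weight M" for p M
  proof -
    have "vmr (p, M) = real (maj p) + - (\<Sum>x\<in>M. real x) / 2" by (simp add: vmr_def)
    then show ?thesis
      using q_pos by (simp only: powr_add marked_weight_def powr_realpow)
  qed
  have "(\<Sum>D\<in>marked_paths s t r. q powr vmr D) = (\<Sum>(p, M)\<in>marked_paths s t r. q ^ maj p * marked_weight M)"
    by (rule sum.cong) (auto simp: weight)
  also have "\<dots> = ballot_sum s t r"
    unfolding marked ballot_sum_def path_weight_def returns_weight_def sum_distrib_left
    by (subst sum.Sigma) (simp_all add: finite_ballot_paths finite_marks)
  finally show ?thesis .
qed

lemma returns_weight_empty: "returns_weight r {} = (if r = 0 then 1 else 0)"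
proof -
  have "{M. M \<subseteq> {} \<and> r \<le> card M} = (if r = 0 then {{}} else {})" by auto
  then show ?thesis using q_pos by (simp add: returns_weight_def marked_weight_def)
qed

lemma returns_weight_insert:
  assumes "finite A" and "x \<notin> A"
  shows "returns_weight r (insert x A) = returns_weight r A + q powr (- real x / 2) * returns_weight (r - 1) A"
proof -
  let ?avoid = "{M. M \<subseteq> A \<and> r \<le> card M}"
  let ?rest = "{N. N \<subseteq> A \<and> r - 1 \<le> card N}"
  have card_insert_x: "card (insert x N) = Suc (card N)" if "N \<subseteq> A" for N
  proof -
    have "finite N" and "x \<notin> N" using that assms finite_subset by blast+
    then show ?thesis by simp
  qed
  have split: "{M. M \<subseteq> insert x A \<and> r \<le> card M} = ?avoid \<union> insert x ` ?rest"
  proof (intro set_eqI iffI)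
    fix M assume M: "M \<in> {M. M \<subseteq> insert x A \<and> r \<le> card M}"
    show "M \<in> ?avoid \<union> insert x ` ?rest"
    proof (cases "x \<in> M")
      case True
      have "finite M" using M assms(1) finite_subset by auto
      then have "r - 1 \<le> card (M - {x})" using M True by (simp add: card_Diff_singleton diff_le_mono)
      moreover have "M = insert x (M - {x})" and "M - {x} \<subseteq> A" using M True by auto
      ultimately show ?thesis by blast
    next
      case False
      then show ?thesis using M by blast
    qed
  next
    fix M assume "M \<in> ?avoid \<union> insert x ` ?rest"
    then show "M \<in> {M. M \<subseteq> insert x A \<and> r \<le> card M}"
      using card_insert_x by auto
  qed
  have disjoint: "?avoid \<inter> insert x ` ?rest = {}" and inj: "inj_on (insert x) ?rest"
    using assms(2) by (auto simp: inj_on_def insert_ident)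
  have finite: "finite ?avoid" "finite (insert x ` ?rest)"
    using assms(1) by (auto intro: finite_subset[of _ "Pow A"])
  have weight_insert: "marked_weight (insert x N) = q powr (- real x / 2) * marked_weight N"
    if "N \<in> ?rest" for N
  proof -
    have "(\<Sum>y\<in>insert x N. real y) = real x + (\<Sum>y\<in>N. real y)"
      using that assms finite_subset by (subst sum.insert) auto
    then show ?thesis by (simp add: marked_weight_def diff_divide_distrib flip: powr_add)
  qed
  have "returns_weight r (insert x A) = returns_weight r A + (\<Sum>M\<in>insert x ` ?rest. marked_weight M)"
    unfolding returns_weight_def split by (rule sum.union_disjoint[OF finite disjoint])
  also have "(\<Sum>M\<in>insert x ` ?rest. marked_weight M) = (\<Sum>N\<in>?rest. marked_weight (insert x N))"
    by (rule sum.reindex[OF inj, unfolded comp_def])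
  also have "\<dots> = q powr (- real x / 2) * returns_weight (r - 1) A"
    unfolding returns_weight_def sum_distrib_left by (rule sum.cong) (simp_all add: weight_insert)
  finally show ?thesis .
qed

lemma path_weight_snoc_False: "path_weight r (p @ [False]) = path_weight r p"
  unfolding path_weight_def by (simp add: maj_snoc returns_snoc)

lemma path_weight_snoc_True_no_valley: "\<not> ends_down p \<Longrightarrow> path_weight r (p @ [True]) = path_weight r p"
  unfolding path_weight_def by (auto simp: maj_snoc returns_snoc)

lemma path_weight_snoc_True_valley:
  "ends_down p \<Longrightarrow> path_height p (length p) \<noteq> 0
     \<Longrightarrow> path_weight r (p @ [True]) = q ^ length p * path_weight r p"
  unfolding path_weight_def by (simp add: maj_snoc returns_snoc power_add)

text \<open>A new return at \<open>x = 2k\<close> adds \<open>2k\<close> to \<open>maj\<close>; if it is marked, the mark takes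
  \<open>k\<close> back off, so \<open>vmr\<close> only grows by \<open>k\<close>.\<close>
lemma path_weight_snoc_True_return:
  assumes "ends_down p" "path_height p (length p) = 0" "length p = 2 * k"
  shows "path_weight r (p @ [True]) = q ^ (2 * k) * path_weight r p + q ^ k * path_weight (r - 1) p"
proof -
  have "length p \<notin> returns p" by (auto dest: returns_less_length)
  then have "returns_weight r (returns (p @ [True]))
      = returns_weight r (returns p) + q powr (- real (2 * k) / 2) * returns_weight (r - 1) (returns p)"
    using assms by (simp add: returns_snoc returns_weight_insert finite_returns)
  moreover have "q ^ (2 * k) * q powr (- real (2 * k) / 2) = q ^ k"
  proof -
    have "- real (2 * k) / 2 = - real k" by simp
    then have "q powr (- real (2 * k) / 2) = inverse (q powr real k)"
      by (simp only: powr_minus)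
    also have "\<dots> = inverse (q ^ k)" using q_pos by (simp only: powr_realpow)
    finally have "q powr (- real (2 * k) / 2) = inverse (q ^ k)" .
    moreover have "q ^ (2 * k) = q ^ k * q ^ k" by (metis mult_2 power_add)
    ultimately show ?thesis using q_pos by simp
  qed
  ultimately show ?thesis
    using assms unfolding path_weight_def by (simp add: maj_snoc power_add algebra_simps)
qed

lemma ballot_sum_Suc_0:
  "ballot_sum (Suc s) 0 r = (\<Sum>p\<in>ballot_paths s 0. path_weight r (p @ [True]))"
proof -
  have no_down: "{p \<in> ballot_paths (Suc s) 0. ends_down p} = {}"
    using ballot_paths_0_not_ends_down by blast
  have "ballot_sum (Suc s) 0 r
      = (\<Sum>p | p \<in> ballot_paths (Suc s) 0 \<and> ends_up p. path_weight r p)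
        + (\<Sum>p | p \<in> ballot_paths (Suc s) 0 \<and> ends_down p. path_weight r p)"
    unfolding ballot_sum_def by (rule sum_ballot_paths_by_last_step) simp
  then show ?thesis by (simp only: no_down sum_ballot_paths_ends_up sum.empty add_0_right)
qed

lemma ballot_sum_Suc_Suc:
  "t \<le> s \<Longrightarrow> ballot_sum (Suc s) (Suc t) r
     = (\<Sum>p\<in>ballot_paths s (Suc t). path_weight r (p @ [True])) + ballot_sum (Suc s) t r"
  using sum_ballot_paths_by_last_step[of "Suc s" "Suc t" "path_weight r"]
  by (simp add: ballot_sum_def sum_ballot_paths_ends_up sum_ballot_paths_ends_down
      path_weight_snoc_False)

lemma ballot_sum_0: "ballot_sum s 0 r = (if r = 0 then 1 else 0)"
proof (induction s)
  case 0
  then show ?case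
    using q_pos by (simp add: ballot_sum_def ballot_paths_0_0 path_weight_def maj_def valleys_def
        returns_def returns_weight_empty)
next
  case (Suc s)
  have "ballot_sum (Suc s) 0 r = ballot_sum s 0 r"
    unfolding ballot_sum_Suc_0 unfolding ballot_sum_def
    by (rule sum.cong) (simp_all add: path_weight_snoc_True_no_valley ballot_paths_0_not_ends_down)
  then show ?case using Suc.IH by simp
qed

lemma sum_snoc_True_off_axis:
  assumes "Suc t < s"
  shows "(\<Sum>p\<in>ballot_paths s (Suc t). path_weight r (p @ [True]))
    = ballot_sum s (Suc t) r + (q ^ (s + Suc t) - 1) * ballot_sum s t r"
proof -
  have "path_weight r (p @ [True])
      = path_weight r p + (if ends_down p then (q ^ (s + Suc t) - 1) * path_weight r p else 0)"
    if "p \<in> ballot_paths s (Suc t)" for p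
    using that assms path_weight_snoc_True_no_valley path_weight_snoc_True_valley
    by (auto simp: ballot_paths_iff algebra_simps)
  then have "(\<Sum>p\<in>ballot_paths s (Suc t). path_weight r (p @ [True]))
      = ballot_sum s (Suc t) r
        + (q ^ (s + Suc t) - 1) * (\<Sum>p | p \<in> ballot_paths s (Suc t) \<and> ends_down p. path_weight r p)"
    by (simp add: ballot_sum_def sum.distrib sum_distrib_left sum.inter_filter[symmetric]
        finite_ballot_paths)
  then show ?thesis
    using assms by (simp add: sum_ballot_paths_ends_down path_weight_snoc_False ballot_sum_def)
qed

lemma sum_snoc_True_on_axis:
  "(\<Sum>p\<in>ballot_paths (Suc t) (Suc t). path_weight r (p @ [True]))
    = q ^ (2 * Suc t) * ballot_sum (Suc t) t r + q ^ Suc t * ballot_sum (Suc t) t (r - 1)"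
proof -
  have "path_weight r (p @ [False, True])
      = q ^ (2 * Suc t) * path_weight r p + q ^ Suc t * path_weight (r - 1) p"
    if "p \<in> ballot_paths (Suc t) t" for p
  proof -
    have "path_height (p @ [False]) (length (p @ [False])) = 0" and "length (p @ [False]) = 2 * Suc t"
      using that path_height_snoc_end[of p False] unfolding ballot_paths_iff by auto
    then show ?thesis
      using path_weight_snoc_True_return[of "p @ [False]" "Suc t" r] by (simp add: path_weight_snoc_False)
  qed
  then show ?thesis
    unfolding sum_ballot_paths_diag ballot_sum_def sum_distrib_left sum.distrib[symmetric]
    by (intro sum.cong) simp_all
qed

lemma ballot_sum_rec:
  "Suc t < s \<Longrightarrow> ballot_sum (Suc s) (Suc t) r
     = ballot_sum (Suc s) t r + ballot_sum s (Suc t) r + (q ^ (s + Suc t) - 1) * ballot_sum s t r"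
  by (simp add: ballot_sum_Suc_Suc sum_snoc_True_off_axis)

lemma ballot_sum_rec_diag:
  "ballot_sum (Suc (Suc t)) (Suc t) r = ballot_sum (Suc (Suc t)) t r
     + q ^ (2 * Suc t) * ballot_sum (Suc t) t r + q ^ Suc t * ballot_sum (Suc t) t (r - 1)"
  by (simp add: ballot_sum_Suc_Suc sum_snoc_True_on_axis)

definition closed_form :: "nat \<Rightarrow> nat \<Rightarrow> nat \<Rightarrow> real" where
  "closed_form s t r = (if r \<le> t then q ^ (Suc r choose 2) * poly (qbinom (s + t) (t - r)) q else 0)"

lemma closed_form_0: "closed_form s 0 r = (if r = 0 then 1 else 0)"
  by (simp add: closed_form_def binomial_eq_0)

lemma closed_form_rec:
  "closed_form (Suc s) (Suc t) r
     = closed_form (Suc s) t r + closed_form s (Suc t) r + (q ^ (s + Suc t) - 1) * closed_form s t r"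
proof (cases "r \<le> t")
  case True
  have pascal: "poly (qbinom (Suc (Suc (s + t))) (Suc (t - r))) q
      = poly (qbinom (Suc (s + t)) (t - r)) q + poly (qbinom (Suc (s + t)) (Suc (t - r))) q
        + (q ^ Suc (s + t) - 1) * poly (qbinom (s + t) (t - r)) q"
    by (simp add: qbinom_Suc_Suc_Suc' poly_monom)
  have "Suc t - r = Suc (t - r)" using True by simp
  then show ?thesis
    using True by (simp add: closed_form_def pascal algebra_simps)
next
  case False
  then show ?thesis by (cases "r = Suc t") (simp_all add: closed_form_def)
qed

lemma closed_form_rec_diag:
  "closed_form (Suc (Suc t)) (Suc t) r = closed_form (Suc (Suc t)) t r
     + q ^ (2 * Suc t) * closed_form (Suc t) t r + q ^ Suc t * closed_form (Suc t) t (r - 1)"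
proof -
  define m where "m = Suc (2 * t)"
  have indices: "Suc (Suc t) + Suc t = Suc (Suc m)" "Suc (Suc t) + t = Suc m" "Suc t + t = m"
    "2 * Suc t = Suc m" by (simp_all add: m_def)
  consider "Suc t < r" | "r = Suc t" | "r = 0" | r' where "r = Suc r'" "r' < t"
    by (metis linorder_neqE_nat not0_implies_Suc Suc_less_eq)
  then show ?thesis
  proof cases
    case 2
    then show ?thesis by (simp add: closed_form_def Suc_choose_2 power_add)
  next
    case 3
    have "t \<le> m" and "qbinom m (Suc t) = qbinom m t"
      using qbinom_symmetric[of t m] by (simp_all add: m_def)
    then have pascal: "poly (qbinom (Suc (Suc m)) (Suc t)) q
        = poly (qbinom (Suc m) t) q + q ^ Suc m * poly (qbinom m t) q + q ^ Suc t * poly (qbinom m t) q"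
      by (simp add: qbinom_Suc_Suc_Suc poly_monom)
    show ?thesis
      using 3 unfolding closed_form_def indices by (simp add: pascal binomial_eq_0)
  next
    case 4
    then obtain j where j: "Suc t - r = Suc j" "t - r = j" "t - (r - 1) = Suc j"
      by (metis Suc_diff_Suc diff_Suc_1 diff_Suc_Suc)
    have "j \<le> m" using j by (simp add: m_def)
    then have pascal: "poly (qbinom (Suc (Suc m)) (Suc j)) q = poly (qbinom (Suc m) j) q
        + q ^ Suc m * poly (qbinom m j) q + q ^ Suc j * poly (qbinom m (Suc j)) q"
      by (simp add: qbinom_Suc_Suc_Suc poly_monom)
    have "(Suc r choose 2) + Suc j = Suc t + (r choose 2)"
      using 4 j Suc_choose_2[of r] by linarith
    then have powers: "q ^ (Suc r choose 2) * q ^ Suc j = q ^ Suc t * q ^ (r choose 2)"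
      by (metis power_add)
    have "closed_form (Suc (Suc t)) (Suc t) r = q ^ (Suc r choose 2) * poly (qbinom (Suc (Suc m)) (Suc j)) q"
      using 4 unfolding closed_form_def indices j by simp
    also have "\<dots> = q ^ (Suc r choose 2) * poly (qbinom (Suc m) j) q
        + q ^ Suc m * (q ^ (Suc r choose 2) * poly (qbinom m j) q)
        + (q ^ (Suc r choose 2) * q ^ Suc j) * poly (qbinom m (Suc j)) q"
      unfolding pascal by (simp add: algebra_simps)
    also have "\<dots> = closed_form (Suc (Suc t)) t r
        + q ^ (2 * Suc t) * closed_form (Suc t) t r + q ^ Suc t * closed_form (Suc t) t (r - 1)"
      using 4 unfolding powers closed_form_def indices j by (simp add: mult.assoc)
    finally show ?thesis .
  qed (simp add: closed_form_def)
qed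

lemma ballot_sum_eq_closed_form: "t < s \<Longrightarrow> ballot_sum s t r = closed_form s t r"
proof (induction "s + t" arbitrary: s t r rule: less_induct)
  case less
  consider "t = 0" | s' t' where "s = Suc s'" "t = Suc t'" "Suc t' < s'"
    | t' where "s = Suc (Suc t')" "t = Suc t'"
    using less.prems by (cases t; cases s) (auto simp: less_Suc_eq)
  then show ?case
  proof cases
    case 1
    then show ?thesis by (simp add: ballot_sum_0 closed_form_0)
  next
    case 2
    then show ?thesis by (simp add: ballot_sum_rec closed_form_rec less.hyps)
  next
    case 3
    then show ?thesis by (simp add: ballot_sum_rec_diag closed_form_rec_diag less.hyps)
  qed
qed

lemma closed_form_Suc_self:
  "closed_form (Suc t) t r = q ^ (Suc r choose 2) * poly (qbinom (Suc t + t) (Suc t + r)) q"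
proof (cases "r \<le> t")
  case True
  then show ?thesis
    using qbinom_symmetric[of "Suc t + r" "Suc t + t"] by (simp add: closed_form_def)
qed (simp add: closed_form_def qbinom_eq_0)

lemma ballot_sum_diag: "ballot_sum (Suc t) (Suc t) r = ballot_sum (Suc t) t r"
  unfolding ballot_sum_def sum_ballot_paths_diag path_weight_snoc_False ..

end

theorem lemma2p3:
  fixes s r :: nat and q :: real
  assumes "0 < s" and "0 < q"
  shows "(\<Sum>D\<in>marked_paths s s r. q powr vmr D)
           = q ^ ((r + 1) choose 2) * poly (qbinom (2 * s - 1) (s + r)) q"
proof -
  obtain t where s: "s = Suc t" using assms(1) by (cases s) auto
  have "(\<Sum>D\<in>marked_paths s s r. q powr vmr D) = closed_form q s t r"
    using assms(2) by (simp add: s sum_marked_paths_eq_ballot_sum ballot_sum_diag ballot_sum_eq_closed_form)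
  also have "\<dots> = q ^ ((r + 1) choose 2) * poly (qbinom (2 * s - 1) (s + r)) q"
    using assms(2) by (simp add: s closed_form_Suc_self mult_2)
  finally show ?thesis .
qed

end
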